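(* $\mathbb{F}(V)^P=\mathbb{F}(a_0,\beta,\Delta)$.
   Context: Let $p>2$ be a prime, $q=p^n$, and $\mathbb{F}$ a field of characteristic $p$ containing $\mathbb{F}_q$. Let $\mathbb{F}(V)=\mathbb{F}(a_0,a_1,a_2)$. For $c\in\mathbb{F}_q$ let $\sigma_c$ act on $\mathbb{F}(a_0,a_1,a_2)$ by the field automorphism $a_2\mapsto a_2+2ca_1+c^2a_0$, $a_1\mapsto a_1+ca_0$, $a_0\mapsto a_0$, and let $P=\{\sigma_c:c\in\mathbb{F}_q\}$ (a group isomorphic to $(\mathbb{F}_q,+)$, the upper unitriangular matrices in $SL_2(\mathbb{F}_q)$). $\mathbb{F}(V)^P$ is the field of $P$-invariant rational functions. Define $\Delta=a_1^2-a_0a_2$ and $\beta=\prod_{c\in\mathbb{F}_q}(a_1+ca_0)$. *)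

theory Defs
  imports "HOL-Computational_Algebra.Computational_Algebra"
begin

text \<open>Polynomial ring F[a0,a1,a2] realised as 'a poly poly poly:
  innermost variable a0, middle variable a1, outermost variable a2.
  The rational function field F(V) = F(a0,a1,a2) is its fraction field.\<close>

type_synonym 'a mpoly3 = "'a poly poly poly"
type_synonym 'a ratfun3 = "'a mpoly3 fract"

definition cK :: "'a::field \<Rightarrow> 'a ratfun3" where
  "cK c = Fract [:[:[:c:]:]:] 1"

definition A0 :: "'a::field ratfun3" where "A0 = Fract [:[:[:0, 1:]:]:] 1"
definition A1 :: "'a::field ratfun3" where "A1 = Fract [:[:0, 1:]:] 1"
definition A2 :: "'a::field ratfun3" where "A2 = Fract [:0, 1:] 1"

definition eval3 :: "'a::field mpoly3 \<Rightarrow> 'a ratfun3 \<Rightarrow> 'a ratfun3 \<Rightarrow> 'a ratfun3 \<Rightarrow> 'a ratfun3" where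
  "eval3 f x0 x1 x2 =
     poly (map_poly (\<lambda>g. poly (map_poly (\<lambda>h. poly (map_poly cK h) x0) g) x1) f) x2"

definition sigma :: "'a::field \<Rightarrow> 'a ratfun3 \<Rightarrow> 'a ratfun3" where
  "sigma c r = (SOME s. \<exists>f g. g \<noteq> 0 \<and> r = Fract f g \<and>
      s = eval3 f A0 (A1 + cK c * A0) (A2 + cK (2 * c) * A1 + cK (c ^ 2) * A0)
        / eval3 g A0 (A1 + cK c * A0) (A2 + cK (2 * c) * A1 + cK (c ^ 2) * A0))"

definition Fq :: "nat \<Rightarrow> 'a::field set" where
  "Fq q = {c. c ^ q = c}"

definition Delta :: "'a::field ratfun3" where
  "Delta = A1 ^ 2 - A0 * A2"

definition beta :: "nat \<Rightarrow> 'a::field ratfun3" where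
  "beta q = (\<Prod>c\<in>Fq q. A1 + cK c * A0)"

definition invariant_field :: "nat \<Rightarrow> 'a::field ratfun3 set" where
  "invariant_field q = {r. \<forall>c\<in>Fq q. sigma c r = r}"

definition gen_field :: "'a::field ratfun3 \<Rightarrow> 'a ratfun3 \<Rightarrow> 'a ratfun3 \<Rightarrow> 'a ratfun3 set" where
  "gen_field x y z = {eval3 f x y z / eval3 g x y z | f g. eval3 g x y z \<noteq> 0}"

end

theory Submission
  imports Defs "Subresultants.More_Homomorphisms"
begin

text \<open>
  Each sigma_c is induced on fractions by a ring automorphism of F[a0,a1,a2], and
  sigma_d o sigma_c = sigma_(c+d). Since F_q is closed under addition (Frobenius), a0, Delta and
  the orbit product beta = prod_c sigma_c(a1) are invariant, so K = F(a0,beta,Delta) is contained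
  in the invariant field.

  Conversely, prod_(c in F_q) (X + c) = X^q - X gives beta = a1^q - a0^(q-1) a1, so the K-span
  of 1, a1, ..., a1^(q-1) is a ring; it contains a2 = (a1^2 - Delta)/a0 and hence every
  polynomial. An invariant element R(a1) of this span, deg R < q, lies in K because R - R(a1)
  vanishes at the q distinct points a1 + c a0. An arbitrary invariant f/g is reduced to this
  case by multiplying numerator and denominator by prod_(c ~= 0) sigma_c(g), which turns the
  denominator into the invariant orbit product of g.
\<close>

lemma hom_poly_map_poly:
  assumes "comm_ring_hom h" and "g 0 = 0"
  shows "h (poly (map_poly g p) x) = poly (map_poly (h \<circ> g) p) (h x)"
proof -
  interpret comm_ring_hom h by (fact assms(1))
  show ?thesis by (simp add: map_poly_map_poly assms(2) flip: poly_map_poly)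
qed

lemma comm_ring_hom_poly_map_poly:
  assumes "comm_ring_hom h"
  shows "comm_ring_hom (\<lambda>p. poly (map_poly h p) x)"
proof -
  interpret base: comm_ring_hom h by (fact assms)
  interpret map_poly_comm_ring_hom h ..
  show ?thesis by unfold_locales (simp_all add: hom_distribs)
qed

definition eval3_via ::
    "('a::comm_ring_1 \<Rightarrow> 'b::comm_ring_1) \<Rightarrow> 'a poly poly poly \<Rightarrow> 'b \<Rightarrow> 'b \<Rightarrow> 'b \<Rightarrow> 'b"
  where "eval3_via k f x0 x1 x2 =
    poly (map_poly (\<lambda>g. poly (map_poly (\<lambda>h. poly (map_poly k h) x0) g) x1) f) x2"

lemma eval3_eq_eval3_via: "eval3 f = eval3_via cK f"
  by (simp add: fun_eq_iff eval3_def eval3_via_def)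

lemma comm_ring_hom_eval3_via:
  "comm_ring_hom k \<Longrightarrow> comm_ring_hom (\<lambda>f. eval3_via k f x0 x1 x2)"
  unfolding eval3_via_def by (intro comm_ring_hom_poly_map_poly)

lemma hom_eval3_via:
  assumes "comm_ring_hom h" and k: "comm_ring_hom k"
  shows "h (eval3_via k f x0 x1 x2) = eval3_via (h \<circ> k) f (h x0) (h x1) (h x2)"
proof -
  interpret comm_ring_hom k by (fact k)
  show ?thesis using assms(1) by (simp add: eval3_via_def hom_poly_map_poly o_def)
qed

context
  fixes k :: "'a::comm_ring_1 \<Rightarrow> 'b::comm_ring_1"
  assumes k: "comm_ring_hom k"
begin

interpretation comm_ring_hom k by (fact k)

lemma eval3_via_const: "eval3_via k [:[:[:a:]:]:] x0 x1 x2 = k a"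
  by (simp add: eval3_via_def Polynomial.map_poly_pCons)

lemma eval3_via_var0: "eval3_via k [:[:[:0, 1:]:]:] x0 x1 x2 = x0"
  and eval3_via_var1: "eval3_via k [:[:0, 1:]:] x0 x1 x2 = x1"
  and eval3_via_var2: "eval3_via k [:0, 1:] x0 x1 x2 = x2"
  by (simp_all add: eval3_via_def Polynomial.map_poly_pCons)

end

lemma field_hom_cK: "field_hom cK"
  unfolding cK_def by unfold_locales (simp_all add: fract_collapse mult.commute)

interpretation cK: field_hom cK
  by (rule field_hom_cK)

definition const3 :: "'a::comm_ring_1 \<Rightarrow> 'a mpoly3" where "const3 a = [:[:[:a:]:]:]"
definition var0 :: "'a::comm_ring_1 mpoly3" where "var0 = [:[:[:0, 1:]:]:]"
definition var1 :: "'a::comm_ring_1 mpoly3" where "var1 = [:[:0, 1:]:]"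
definition var2 :: "'a::comm_ring_1 mpoly3" where "var2 = [:0, 1:]"

lemma comm_ring_hom_const3: "comm_ring_hom const3"
  unfolding const3_def by unfold_locales (simp_all add: mult_to_poly)

lemma poly_map_poly_coeff_lift_X: "poly (map_poly (\<lambda>a. [:a:]) p) [:0, 1:] = (p :: 'a::comm_ring_1 poly)"
  unfolding pcompose_altdef[symmetric] by (rule pcompose_idR)

lemma eval3_via_const3_vars: "eval3_via const3 f var0 var1 var2 = f"
proof -
  have level0: "poly (map_poly const3 h) var0 = [:[:h:]:]" for h :: "'a poly"
  proof -
    have "map_poly const3 h = map_poly (\<lambda>a. [:a:]) (map_poly (\<lambda>a. [:a:]) (map_poly (\<lambda>a. [:a:]) h))"
      by (simp add: const3_def[abs_def] map_poly_map_poly o_def)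
    then show ?thesis
      unfolding var0_def by (simp only: coeff_lift_hom.poly_map_poly poly_map_poly_coeff_lift_X)
  qed
  have level1: "poly (map_poly (\<lambda>h. [:[:h:]:]) g) var1 = [:g:]" for g :: "'a poly poly"
  proof -
    have "map_poly (\<lambda>h. [:[:h:]:]) g = map_poly (\<lambda>a. [:a:]) (map_poly (\<lambda>a. [:a:]) g)"
      by (simp add: map_poly_map_poly o_def)
    then show ?thesis
      unfolding var1_def by (simp only: coeff_lift_hom.poly_map_poly poly_map_poly_coeff_lift_X)
  qed
  show ?thesis
    unfolding eval3_via_def level0 level1 var2_def by (rule poly_map_poly_coeff_lift_X)
qed

definition sigma_poly :: "'a::comm_ring_1 \<Rightarrow> 'a mpoly3 \<Rightarrow> 'a mpoly3" where
  "sigma_poly c f =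
     eval3_via const3 f var0 (var1 + const3 c * var0)
       (var2 + 2 * const3 c * var1 + const3 c ^ 2 * var0)"

lemma comm_ring_hom_sigma_poly: "comm_ring_hom (sigma_poly c)"
  unfolding sigma_poly_def by (rule comm_ring_hom_eval3_via[OF comm_ring_hom_const3])

interpretation sigma_poly: comm_ring_hom "sigma_poly c" for c
  by (rule comm_ring_hom_sigma_poly)

lemma sigma_poly_const3: "sigma_poly c (const3 a) = const3 a"
  and sigma_poly_var0: "sigma_poly c var0 = var0"
  and sigma_poly_var1: "sigma_poly c var1 = var1 + const3 c * var0"
  and sigma_poly_var2: "sigma_poly c var2 = var2 + 2 * const3 c * var1 + const3 c ^ 2 * var0"
  unfolding sigma_poly_def var0_def var1_def var2_def
  by (simp_all only: eval3_via_const eval3_via_var0 eval3_via_var1 eval3_via_var2 comm_ring_hom_const3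
      const3_def)

lemma sigma_poly_0: "sigma_poly 0 f = f"
proof -
  have "const3 0 = (0 :: 'a mpoly3)" by (simp add: const3_def)
  then show ?thesis by (simp add: sigma_poly_def eval3_via_const3_vars)
qed

lemma sigma_poly_sigma_poly: "sigma_poly d (sigma_poly c f) = sigma_poly (c + d) f"
proof -
  interpret const: comm_ring_hom const3 by (rule comm_ring_hom_const3)
  have "sigma_poly d \<circ> const3 = const3" by (simp add: fun_eq_iff sigma_poly_const3)
  then have "sigma_poly d (sigma_poly c f) =
      eval3_via const3 f var0 (sigma_poly d (var1 + const3 c * var0))
      (sigma_poly d (var2 + 2 * const3 c * var1 + const3 c ^ 2 * var0))"
    unfolding sigma_poly_def[of c]
    by (simp only: hom_eval3_via[OF comm_ring_hom_sigma_poly comm_ring_hom_const3] sigma_poly_var0)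
  also have "\<dots> = sigma_poly (c + d) f"
    unfolding sigma_poly_def[of "c + d"]
    by (simp only: sigma_poly.hom_add sigma_poly.hom_mult sigma_poly.hom_power sigma_poly.hom_numeral
        const.hom_add const.hom_power sigma_poly_const3
        sigma_poly_var0 sigma_poly_var1 sigma_poly_var2) (simp add: algebra_simps power2_eq_square)
  finally show ?thesis .
qed

lemma sigma_poly_eq_0_iff: "sigma_poly c f = 0 \<longleftrightarrow> f = 0"
proof
  assume "sigma_poly c f = 0"
  then have "sigma_poly (- c) (sigma_poly c f) = 0" by simp
  then show "f = 0" by (simp add: sigma_poly_sigma_poly sigma_poly_0)
qed simp

lemma to_fract_vars: "to_fract var0 = A0" "to_fract var1 = A1" "to_fract var2 = A2"
  by (simp_all add: to_fract_def var0_def var1_def var2_def A0_def A1_def A2_def)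

lemma to_fract_const3: "to_fract (const3 a) = cK a"
  by (simp add: to_fract_def const3_def cK_def)

lemma eval3_at_sigma_vars:
  "eval3 f A0 (A1 + cK c * A0) (A2 + cK (2 * c) * A1 + cK (c ^ 2) * A0) = to_fract (sigma_poly c f)"
proof -
  have lift: "to_fract \<circ> const3 = cK" by (simp add: fun_eq_iff to_fract_const3)
  show ?thesis
    unfolding sigma_poly_def lift
      hom_eval3_via[OF to_fract_hom.comm_ring_hom_axioms comm_ring_hom_const3]
    by (simp add: to_fract_const3 to_fract_vars eval3_eq_eval3_via hom_distribs)
qed

text \<open>\<open>sigma\<close> is defined through a choice of representative; the choice is irrelevant because
  \<open>sigma_poly c\<close> is an injective ring homomorphism and so respects equality of fractions.\<close>

lemma sigma_Fract:
  assumes "g \<noteq> 0"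
  shows "sigma c (Fract f g) = Fract (sigma_poly c f) (sigma_poly c g)"
proof -
  have quotient_eq: "eval3 f' A0 (A1 + cK c * A0) (A2 + cK (2 * c) * A1 + cK (c ^ 2) * A0)
      / eval3 g' A0 (A1 + cK c * A0) (A2 + cK (2 * c) * A1 + cK (c ^ 2) * A0)
      = Fract (sigma_poly c f') (sigma_poly c g')" for f' g'
    by (simp add: eval3_at_sigma_vars to_fract_def)
  have repr: "Fract (sigma_poly c f') (sigma_poly c g') = Fract (sigma_poly c f) (sigma_poly c g)"
    if "g' \<noteq> 0" "Fract f g = Fract f' g'" for f' g'
  proof -
    from that assms have "f * g' = f' * g" by (simp add: eq_fract)
    then have "sigma_poly c f * sigma_poly c g' = sigma_poly c f' * sigma_poly c g"
      by (metis sigma_poly.hom_mult)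
    then show ?thesis using that assms by (simp add: eq_fract sigma_poly_eq_0_iff)
  qed
  show ?thesis
    unfolding sigma_def quotient_eq
  proof (rule some_equality)
    show "\<exists>f' g'. g' \<noteq> 0 \<and> Fract f g = Fract f' g' \<and>
        Fract (sigma_poly c f) (sigma_poly c g) = Fract (sigma_poly c f') (sigma_poly c g')"
      using assms by blast
  qed (use repr in blast)
qed

lemma eval3_generators: "eval3 f A0 A1 A2 = to_fract f"
  using eval3_at_sigma_vars[of f 0] by (simp add: sigma_poly_0)

lemma sigma_to_fract: "sigma c (to_fract f) = to_fract (sigma_poly c f)"
  by (simp add: to_fract_def sigma_Fract)

lemma field_hom_sigma: "field_hom (sigma c)"
proof
  fix x y :: "'a::field ratfun3"
  obtain a b where x: "x = Fract a b" "b \<noteq> 0" by (cases x)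
  obtain a' b' where y: "y = Fract a' b'" "b' \<noteq> 0" by (cases y)
  show "sigma c (x + y) = sigma c x + sigma c y" "sigma c (x * y) = sigma c x * sigma c y"
    using x y by (simp_all add: sigma_Fract sigma_poly_eq_0_iff hom_distribs)
next
  show "sigma c 0 = 0"
    using sigma_to_fract[of c 0] by simp
  show "sigma c 1 = 1"
    using sigma_to_fract[of c 1] by simp
qed

interpretation sigma: field_hom "sigma c" for c
  by (rule field_hom_sigma)

lemma sigma_cK: "sigma c (cK a) = cK a"
  using sigma_to_fract[of c "const3 a"] by (simp add: sigma_poly_const3 to_fract_const3)

lemma sigma_A0: "sigma c A0 = A0"
  and sigma_A1: "sigma c A1 = A1 + cK c * A0"
  and sigma_A2: "sigma c A2 = A2 + 2 * cK c * A1 + cK c ^ 2 * A0"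
proof -
  have "to_fract (const3 c ^ 2) = cK c ^ 2" by (simp add: power2_eq_square to_fract_const3)
  then show "sigma c A0 = A0" "sigma c A1 = A1 + cK c * A0"
    "sigma c A2 = A2 + 2 * cK c * A1 + cK c ^ 2 * A0"
    using sigma_to_fract[of c var0] sigma_to_fract[of c var1] sigma_to_fract[of c var2]
    by (simp_all add: sigma_poly_var0 sigma_poly_var1 sigma_poly_var2 to_fract_vars to_fract_const3
        to_fract_hom.hom_numeral)
qed

lemma sigma_sigma: "sigma d (sigma c x) = sigma (c + d) x"
proof -
  obtain a b where "x = Fract a b" "b \<noteq> 0" by (cases x)
  then show ?thesis by (simp add: sigma_Fract sigma_poly_eq_0_iff sigma_poly_sigma_poly)
qed

lemma sigma_0: "sigma 0 x = x"
proof -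
  obtain a b where "x = Fract a b" "b \<noteq> 0" by (cases x)
  then show ?thesis by (simp add: sigma_Fract sigma_poly_0)
qed

lemma sigma_eval3: "sigma c (eval3 f x y z) = eval3 f (sigma c x) (sigma c y) (sigma c z)"
proof -
  have "sigma c \<circ> cK = cK" by (simp add: fun_eq_iff sigma_cK)
  then show ?thesis
    by (simp add: eval3_eq_eval3_via hom_eval3_via[OF sigma.comm_ring_hom_axioms cK.comm_ring_hom_axioms])
qed

lemma Fq_add_closed:
  fixes c d :: "'a::field"
  assumes "prime CHAR('a)" and "q = CHAR('a) ^ n" and "c \<in> Fq q" and "d \<in> Fq q"
  shows "c + d \<in> Fq q"
  using assms freshmans_dream'[OF assms(1,2)] by (simp add: Fq_def)

lemma bij_betw_add_Fq:
  fixes d :: "'a::field"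
  assumes "finite (Fq q :: 'a set)" and "\<And>c. c \<in> Fq q \<Longrightarrow> c + d \<in> Fq q"
  shows "bij_betw (\<lambda>c. c + d) (Fq q) (Fq q)"
proof -
  have inj: "inj_on (\<lambda>c. c + d) (Fq q)" by (rule inj_onI) simp
  have "(\<lambda>c. c + d) ` Fq q = Fq q"
    by (rule endo_inj_surj) (use assms inj in auto)
  with inj show ?thesis by (simp add: bij_betw_def)
qed

lemma sigma_Delta: "sigma c Delta = Delta"
  by (simp add: Delta_def hom_distribs sigma_A0 sigma_A1 sigma_A2)
    (simp add: algebra_simps power2_eq_square)

definition orbit_prod :: "nat \<Rightarrow> 'a::field ratfun3 \<Rightarrow> 'a ratfun3" where
  "orbit_prod q x = (\<Prod>c\<in>Fq q. sigma c x)"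

lemma sigma_orbit_prod:
  fixes d :: "'a::field"
  assumes "finite (Fq q :: 'a set)" and "\<And>c. c \<in> Fq q \<Longrightarrow> c + d \<in> Fq q"
  shows "sigma d (orbit_prod q x) = orbit_prod q x"
  using prod.reindex_bij_betw[OF bij_betw_add_Fq[OF assms], of "\<lambda>c. sigma c x"]
  by (simp add: orbit_prod_def sigma.hom_prod sigma_sigma)

lemma beta_eq_orbit_prod: "beta q = orbit_prod q A1"
  by (simp add: beta_def orbit_prod_def sigma_A1)

lemma comm_ring_hom_eval3: "comm_ring_hom (\<lambda>f. eval3 f x y z)"
  unfolding eval3_eq_eval3_via by (rule comm_ring_hom_eval3_via[OF cK.comm_ring_hom_axioms])

interpretation eval3: comm_ring_hom "\<lambda>f. eval3 f x y z" for x y z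
  by (rule comm_ring_hom_eval3)

lemma eval3_const3: "eval3 (const3 a) x y z = cK a"
  and eval3_var0: "eval3 var0 x y z = x"
  and eval3_var1: "eval3 var1 x y z = y"
  and eval3_var2: "eval3 var2 x y z = z"
  unfolding eval3_eq_eval3_via const3_def var0_def var1_def var2_def
  by (simp_all only: cK.comm_ring_hom_axioms eval3_via_const eval3_via_var0 eval3_via_var1 eval3_via_var2)

lemma gen_field_iff:
  "r \<in> gen_field x y z \<longleftrightarrow> (\<exists>f g. r = eval3 f x y z / eval3 g x y z \<and> eval3 g x y z \<noteq> 0)"
  unfolding gen_field_def by blast

lemma eval3_in_gen_field: "eval3 f x y z \<in> gen_field x y z"
  unfolding gen_field_iff by (rule exI[of _ f], rule exI[of _ 1]) simp

lemma gen_field_cK: "cK a \<in> gen_field x y z"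
  and gen_field_generators: "x \<in> gen_field x y z" "y \<in> gen_field x y z" "z \<in> gen_field x y z"
  using eval3_in_gen_field[of "const3 a"] eval3_in_gen_field[of var0] eval3_in_gen_field[of var1]
    eval3_in_gen_field[of var2]
  by (simp_all add: eval3_const3 eval3_var0 eval3_var1 eval3_var2)

lemma gen_field_0: "0 \<in> gen_field x y z" and gen_field_1: "1 \<in> gen_field x y z"
  using gen_field_cK[of 0] gen_field_cK[of 1] by simp_all

lemma gen_field_add:
  assumes "r \<in> gen_field x y z" and "s \<in> gen_field x y z"
  shows "r + s \<in> gen_field x y z"
proof -
  obtain f g where r: "r = eval3 f x y z / eval3 g x y z" "eval3 g x y z \<noteq> 0"
    using assms(1) gen_field_iff by blast
  obtain f' g' where s: "s = eval3 f' x y z / eval3 g' x y z" "eval3 g' x y z \<noteq> 0"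
    using assms(2) gen_field_iff by blast
  have "r + s = eval3 (f * g' + f' * g) x y z / eval3 (g * g') x y z"
    using r s by (simp add: hom_distribs add_frac_eq)
  moreover have "eval3 (g * g') x y z \<noteq> 0" using r s by (simp add: hom_distribs)
  ultimately show ?thesis unfolding gen_field_iff by blast
qed

lemma gen_field_mult:
  assumes "r \<in> gen_field x y z" and "s \<in> gen_field x y z"
  shows "r * s \<in> gen_field x y z"
proof -
  obtain f g where r: "r = eval3 f x y z / eval3 g x y z" "eval3 g x y z \<noteq> 0"
    using assms(1) gen_field_iff by blast
  obtain f' g' where s: "s = eval3 f' x y z / eval3 g' x y z" "eval3 g' x y z \<noteq> 0"
    using assms(2) gen_field_iff by blast
  have "r * s = eval3 (f * f') x y z / eval3 (g * g') x y z"
    using r s by (simp add: hom_distribs)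
  moreover have "eval3 (g * g') x y z \<noteq> 0" using r s by (simp add: hom_distribs)
  ultimately show ?thesis unfolding gen_field_iff by blast
qed

lemma gen_field_inverse:
  assumes "r \<in> gen_field x y z"
  shows "inverse r \<in> gen_field x y z"
proof -
  obtain f g where r: "r = eval3 f x y z / eval3 g x y z" "eval3 g x y z \<noteq> 0"
    using assms gen_field_iff by blast
  show ?thesis
  proof (cases "eval3 f x y z = 0")
    case True
    then show ?thesis using r gen_field_0 by simp
  next
    case False
    then have "inverse r = eval3 g x y z / eval3 f x y z" using r by simp
    with False show ?thesis unfolding gen_field_iff by blast
  qed
qed

lemma gen_field_uminus: "r \<in> gen_field x y z \<Longrightarrow> - r \<in> gen_field x y z"
  using gen_field_mult[OF gen_field_cK[of "- 1"]] by (simp add: hom_distribs)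

lemma gen_field_diff: "r \<in> gen_field x y z \<Longrightarrow> s \<in> gen_field x y z \<Longrightarrow> r - s \<in> gen_field x y z"
  using gen_field_add[of r x y z "- s"] gen_field_uminus[of s] by simp

lemma gen_field_divide: "r \<in> gen_field x y z \<Longrightarrow> s \<in> gen_field x y z \<Longrightarrow> r / s \<in> gen_field x y z"
  by (simp add: divide_inverse gen_field_mult gen_field_inverse)

lemma gen_field_power: "r \<in> gen_field x y z \<Longrightarrow> r ^ n \<in> gen_field x y z"
  by (induction n) (simp_all add: gen_field_1 gen_field_mult)

lemma prod_Fq_linear_factors:
  assumes card: "card (Fq q :: 'a::field set) = q" and "2 \<le> q" and "odd q"
  shows "(\<Prod>c\<in>Fq q. [:c, 1:]) = monom 1 q - [:0, 1 :: 'a:]"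
proof (rule poly_eqI_degree_lead_coeff[of _ q _ "uminus ` Fq q"])
  have fin: "finite (Fq q :: 'a set)" using card \<open>2 \<le> q\<close> by (intro card_ge_0_finite) simp
  have deg: "degree (\<Prod>c\<in>Fq q. [:c, 1 :: 'a:]) = q"
    using fin by (subst degree_prod_eq_sum_degree) (simp_all add: card)
  then show "degree (\<Prod>c\<in>Fq q. [:c, 1 :: 'a:]) \<le> q" by simp
  have "coeff (\<Prod>c\<in>Fq q. [:c, 1 :: 'a:]) q = 1"
    using deg lead_coeff_prod[of "\<lambda>c. [:c, 1 :: 'a:]" "Fq q"] by simp
  moreover have "coeff [:0, 1 :: 'a:] q = 0" using \<open>2 \<le> q\<close> by (simp add: coeff_pCons split: nat.split)
  ultimately show "coeff (\<Prod>c\<in>Fq q. [:c, 1:]) q = coeff (monom 1 q - [:0, 1 :: 'a:]) q" by simp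
  show "degree (monom 1 q - [:0, 1 :: 'a:]) \<le> q"
    using \<open>2 \<le> q\<close> degree_diff_le_max[of "monom (1::'a) q" "[:0, 1:]"] by (simp add: degree_monom_eq)
  show "q \<le> card (uminus ` Fq q :: 'a set)"
    by (simp add: card_image card)
  fix z :: 'a assume "z \<in> uminus ` Fq q"
  then obtain e where e: "e \<in> Fq q" "z = - e" by blast
  have "poly (\<Prod>c\<in>Fq q. [:c, 1:]) z = 0"
    using e fin by (simp add: poly_prod prod_zero_iff)
  moreover have "(- e) ^ q = - e" using e \<open>odd q\<close> by (simp add: Fq_def)
  then have "poly (monom 1 q - [:0, 1:]) z = 0" using e by (simp add: poly_monom)
  ultimately show "poly (\<Prod>c\<in>Fq q. [:c, 1:]) z = poly (monom 1 q - [:0, 1:]) z" by simp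
qed

lemma A0_nonzero: "A0 \<noteq> 0"
  by (simp add: A0_def flip: to_fract_def)

lemma beta_closed_form:
  assumes "card (Fq q :: 'a::field set) = q" and "2 \<le> q" and "odd q"
  shows "(beta q :: 'a ratfun3) = A1 ^ q - A0 ^ (q - 1) * A1"
proof -
  interpret cK_poly: map_poly_comm_ring_hom cK ..
  let ?t = "A1 / A0 :: 'a ratfun3"
  have "beta q = (\<Prod>c\<in>Fq q. A0 * poly [:cK c, 1:] ?t)"
    unfolding beta_def using A0_nonzero[where 'a='a] by (intro prod.cong) (simp_all add: field_simps)
  also have "\<dots> = A0 ^ q * (\<Prod>c\<in>Fq q. poly [:cK c, 1:] ?t)"
    by (simp only: prod.distrib prod_constant assms(1))
  also have "\<dots> = A0 ^ q * poly (map_poly cK (\<Prod>c\<in>Fq q. [:c, 1:])) ?t"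
    by (simp add: poly_prod hom_distribs)
  also have "\<dots> = A0 ^ q * (?t ^ q - ?t)"
    unfolding prod_Fq_linear_factors[OF assms] by (simp add: hom_distribs poly_monom)
  also have "\<dots> = A1 ^ q - A0 ^ (q - 1) * A1"
    using A0_nonzero[where 'a='a] \<open>2 \<le> q\<close> by (cases q) (simp_all add: power_divide field_simps)
  finally show ?thesis .
qed

lemma gen_field_subset_invariant_field:
  assumes "finite (Fq q :: 'a::field set)"
    and "\<And>c d. c \<in> Fq q \<Longrightarrow> d \<in> Fq q \<Longrightarrow> c + d \<in> (Fq q :: 'a set)"
  shows "gen_field A0 (beta q) Delta \<subseteq> (invariant_field q :: 'a ratfun3 set)"
proof
  fix r :: "'a ratfun3"
  assume "r \<in> gen_field A0 (beta q) Delta"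
  then obtain f g where r: "r = eval3 f A0 (beta q) Delta / eval3 g A0 (beta q) Delta"
    unfolding gen_field_def by blast
  have "sigma c r = r" if "c \<in> Fq q" for c
    using sigma_orbit_prod[OF assms(1)] assms(2) that
    by (simp add: r hom_distribs sigma_eval3 sigma_A0 sigma_Delta beta_eq_orbit_prod)
  then show "r \<in> invariant_field q" by (simp add: invariant_field_def)
qed

lemma poly_map_poly_closed:
  assumes "\<And>a. h a \<in> S" and "h 0 = 0" and "x \<in> S" and "0 \<in> S"
    and "\<And>u v. u \<in> S \<Longrightarrow> v \<in> S \<Longrightarrow> u + v \<in> S"
    and "\<And>u v. u \<in> S \<Longrightarrow> v \<in> S \<Longrightarrow> u * v \<in> S"
  shows "poly (map_poly h p) x \<in> S"
  by (induction p) (simp_all add: Polynomial.map_poly_pCons assms)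

lemma eval3_closed:
  assumes "\<And>a. cK a \<in> S" and "x \<in> S" and "y \<in> S" and "z \<in> S" and "0 \<in> S"
    and "\<And>u v. u \<in> S \<Longrightarrow> v \<in> S \<Longrightarrow> u + v \<in> S"
    and "\<And>u v. u \<in> S \<Longrightarrow> v \<in> S \<Longrightarrow> u * v \<in> S"
  shows "eval3 f x y z \<in> S"
  unfolding eval3_def
  by (rule poly_map_poly_closed, rule poly_map_poly_closed, rule poly_map_poly_closed)
    (simp_all add: assms)

definition powers_span :: "'a::field set \<Rightarrow> 'a \<Rightarrow> nat \<Rightarrow> 'a set" where
  "powers_span K \<alpha> q = {poly R \<alpha> | R. (\<forall>i. coeff R i \<in> K) \<and> degree R < q}"

lemma powers_span_const:
  assumes "a \<in> gen_field x y z" and "0 < q"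
  shows "a \<in> powers_span (gen_field x y z) \<alpha> q"
  unfolding powers_span_def using assms gen_field_0
  by (intro CollectI exI[of _ "[:a:]"]) (auto simp: coeff_pCons split: nat.split)

lemma powers_span_add:
  assumes "v \<in> powers_span (gen_field x y z) \<alpha> q" and "w \<in> powers_span (gen_field x y z) \<alpha> q"
  shows "v + w \<in> powers_span (gen_field x y z) \<alpha> q"
proof -
  obtain R S where R: "v = poly R \<alpha>" "\<forall>i. coeff R i \<in> gen_field x y z" "degree R < q"
    and S: "w = poly S \<alpha>" "\<forall>i. coeff S i \<in> gen_field x y z" "degree S < q"
    using assms unfolding powers_span_def by blast
  have "degree (R + S) < q" using R S degree_add_le_max[of R S] by linarith
  with R S show ?thesis
    unfolding powers_span_def by (intro CollectI exI[of _ "R + S"]) (simp add: gen_field_add)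
qed

lemma powers_span_scale:
  assumes "a \<in> gen_field x y z" and "w \<in> powers_span (gen_field x y z) \<alpha> q"
  shows "a * w \<in> powers_span (gen_field x y z) \<alpha> q"
proof -
  obtain S where S: "w = poly S \<alpha>" "\<forall>i. coeff S i \<in> gen_field x y z" "degree S < q"
    using assms(2) unfolding powers_span_def by blast
  have "degree (Polynomial.smult a S) < q" using S degree_smult_le[of a S] by linarith
  with S assms(1) show ?thesis
    unfolding powers_span_def by (intro CollectI exI[of _ "Polynomial.smult a S"]) (simp add: gen_field_mult)
qed

lemma powers_span_mult_root:
  assumes root: "\<alpha> ^ q = poly M \<alpha>"
    and M: "\<forall>i. coeff M i \<in> gen_field x y z" "degree M < q"
    and v: "v \<in> powers_span (gen_field x y z) \<alpha> q"
  shows "\<alpha> * v \<in> powers_span (gen_field x y z) \<alpha> q"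
proof -
  obtain R where R: "v = poly R \<alpha>" "\<forall>i. coeff R i \<in> gen_field x y z" "degree R < q"
    using v unfolding powers_span_def by blast
  have "0 < q" using R(3) by simp
  define R' where "R' = pCons 0 R - Polynomial.smult (coeff R (q - 1)) (monom 1 q - M)"
  have "\<alpha> * v = poly R' \<alpha>" using root by (simp add: R'_def R(1) poly_monom)
  moreover have "\<forall>i. coeff R' i \<in> gen_field x y z"
    using R(2) M(1)
    by (simp add: R'_def coeff_pCons gen_field_diff gen_field_mult gen_field_0 gen_field_1 split: nat.split)
  moreover have "degree R' < q"
  proof (rule degree_lessI)
    show "R' \<noteq> 0 \<or> 0 < q" using \<open>0 < q\<close> by simp
    show "\<forall>k\<ge>q. coeff R' k = 0"
    proof (intro allI impI)
      fix k assume "q \<le> k"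
      then have M_k: "coeff M k = 0" using M(2) by (intro coeff_eq_0) simp
      show "coeff R' k = 0"
      proof (cases "k = q")
        case True
        then have "coeff (pCons 0 R) k = coeff R (q - 1)" using \<open>0 < q\<close> by (cases q) simp_all
        then show ?thesis using True M_k by (simp add: R'_def)
      next
        case False
        then have "coeff (pCons 0 R) k = 0"
          using \<open>q \<le> k\<close> R(3) by (cases k) (simp_all add: coeff_eq_0)
        then show ?thesis using False M_k by (simp add: R'_def)
      qed
    qed
  qed
  ultimately show ?thesis unfolding powers_span_def by blast
qed

lemma powers_span_mult:
  assumes root: "\<alpha> ^ q = poly M \<alpha>"
    and M: "\<forall>i. coeff M i \<in> gen_field x y z" "degree M < q"
    and v: "v \<in> powers_span (gen_field x y z) \<alpha> q" and w: "w \<in> powers_span (gen_field x y z) \<alpha> q"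
  shows "v * w \<in> powers_span (gen_field x y z) \<alpha> q"
proof -
  have "0 < q" using M(2) by simp
  have "poly R \<alpha> * w \<in> powers_span (gen_field x y z) \<alpha> q" if "\<forall>i. coeff R i \<in> gen_field x y z" for R
    using that
  proof (induction R)
    case 0
    show ?case using powers_span_const[OF gen_field_0 \<open>0 < q\<close>] by simp
  next
    case (pCons a R)
    have "a \<in> gen_field x y z" using pCons.prems spec[OF pCons.prems, of 0] by simp
    moreover have "poly R \<alpha> * w \<in> powers_span (gen_field x y z) \<alpha> q"
      using pCons.IH pCons.prems by (metis coeff_pCons_Suc)
    moreover have "poly (pCons a R) \<alpha> * w = a * w + \<alpha> * (poly R \<alpha> * w)"
      by (simp add: algebra_simps)
    ultimately show ?case
      by (simp only: powers_span_add powers_span_scale[OF _ w] powers_span_mult_root[OF root M])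
  qed
  then show ?thesis using v unfolding powers_span_def by blast
qed

context
  fixes q :: nat
  assumes card_Fq: "card (Fq q :: 'a::field set) = q"
    and two_le_q: "2 \<le> q" and odd_q: "odd q"
    and Fq_add: "\<And>c d. c \<in> Fq q \<Longrightarrow> d \<in> Fq q \<Longrightarrow> c + d \<in> (Fq q :: 'a set)"
begin

lemma finite_Fq: "finite (Fq q :: 'a set)"
  using card_Fq two_le_q by (intro card_ge_0_finite) simp

lemma A1_power_q: "A1 ^ q = poly [:beta q, A0 ^ (q - 1):] (A1 :: 'a ratfun3)"
  using beta_closed_form[OF card_Fq two_le_q odd_q] by simp

lemma powers_span_A1_mult:
  assumes "v \<in> powers_span (gen_field A0 (beta q) Delta) (A1 :: 'a ratfun3) q"
    and "w \<in> powers_span (gen_field A0 (beta q) Delta) A1 q"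
  shows "v * w \<in> powers_span (gen_field A0 (beta q) Delta) A1 q"
proof (rule powers_span_mult[OF A1_power_q _ _ assms])
  show "\<forall>i. coeff [:beta q, A0 ^ (q - 1):] i \<in> gen_field A0 (beta q) Delta"
    by (simp add: coeff_pCons gen_field_generators gen_field_power gen_field_0 split: nat.split)
  show "degree [:beta q, A0 ^ (q - 1):] < q" using two_le_q by simp
qed

lemma powers_span_A1_prod:
  assumes "\<And>c. c \<in> C \<Longrightarrow> h c \<in> powers_span (gen_field A0 (beta q) Delta) (A1 :: 'a ratfun3) q"
  shows "prod h C \<in> powers_span (gen_field A0 (beta q) Delta) A1 q"
  using assms two_le_q
  by (induction C rule: infinite_finite_induct)
    (simp_all add: powers_span_const gen_field_1 powers_span_A1_mult)

lemma to_fract_in_powers_span: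
  "to_fract f \<in> powers_span (gen_field A0 (beta q) Delta) (A1 :: 'a ratfun3) q"
proof -
  let ?K = "gen_field A0 (beta q) Delta :: 'a ratfun3 set"
  let ?V = "powers_span ?K A1 q"
  have const: "a \<in> ?V" if "a \<in> ?K" for a
    using powers_span_const[OF that] two_le_q by simp
  have A1: "A1 \<in> ?V"
    using powers_span_mult_root[OF A1_power_q _ _ const[OF gen_field_1]] two_le_q
    by (simp add: coeff_pCons gen_field_generators gen_field_power gen_field_0 split: nat.split)
  have A2: "A2 \<in> ?V"
  proof -
    have "A2 = inverse A0 * (A0 * (A2 :: 'a ratfun3))"
      using A0_nonzero[where 'a='a] by simp
    also have "\<dots> = inverse A0 * (A1 * A1) + - inverse A0 * Delta"
      by (simp add: Delta_def power2_eq_square algebra_simps)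
    finally have "(A2 :: 'a ratfun3) = inverse A0 * (A1 * A1) + - inverse A0 * Delta" .
    moreover have "inverse A0 \<in> ?V" "- inverse A0 \<in> ?V" "Delta \<in> ?V"
      by (intro const gen_field_uminus gen_field_inverse gen_field_generators)+
    ultimately show ?thesis
      using A1 powers_span_add powers_span_A1_mult by metis
  qed
  have "eval3 f A0 A1 A2 \<in> ?V"
    by (rule eval3_closed)
      (simp_all add: const gen_field_cK gen_field_generators gen_field_0 A1 A2 powers_span_add
        powers_span_A1_mult)
  then show ?thesis by (simp add: eval3_generators)
qed

lemma fixed_powers_span_in_gen_field:
  assumes r: "r \<in> powers_span (gen_field A0 (beta q) Delta) (A1 :: 'a ratfun3) q"
    and fixed: "\<forall>c\<in>Fq q. sigma c r = r"
  shows "r \<in> gen_field A0 (beta q) Delta"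
proof -
  obtain R where R: "r = poly R A1" "\<forall>i. coeff R i \<in> gen_field A0 (beta q) Delta" "degree R < q"
    using r unfolding powers_span_def by blast
  have roots: "poly (R - [:r:]) (A1 + cK c * A0) = 0" if c: "c \<in> Fq q" for c
  proof -
    have "map_poly (sigma c) R = R"
      using gen_field_subset_invariant_field[OF finite_Fq Fq_add] c R(2)
      by (intro poly_eqI) (auto simp: coeff_map_poly invariant_field_def)
    moreover have "sigma c r = poly (map_poly (sigma c) R) (sigma c A1)"
      by (simp add: R(1))
    ultimately have "sigma c r = poly R (A1 + cK c * A0)"
      by (simp add: sigma_A1)
    with fixed c show ?thesis by simp
  qed
  have "R - [:r:] = 0"
  proof (rule ccontr)
    assume nz: "R - [:r:] \<noteq> 0"
    have "inj_on (\<lambda>c. A1 + cK c * A0) (Fq q :: 'a set)"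
      using A0_nonzero[where 'a='a] by (intro inj_onI) simp
    then have "q = card ((\<lambda>c. A1 + cK c * A0) ` (Fq q :: 'a set))"
      by (simp add: card_image card_Fq)
    also have "\<dots> \<le> card {x. poly (R - [:r:]) x = 0}"
      by (rule card_mono[OF poly_roots_finite[OF nz]]) (use roots in auto)
    also have "\<dots> \<le> degree (R - [:r:])"
      by (rule card_poly_roots_bound[OF nz])
    also have "\<dots> < q"
      using R(3) two_le_q degree_diff_le_max[of R "[:r:]"] by simp
    finally show False by simp
  qed
  then have "coeff R 0 = r" by (metis coeff_pCons_0 eq_iff_diff_eq_0)
  with R(2) show ?thesis by metis
qed

lemma invariant_field_subset_gen_field:
  "invariant_field q \<subseteq> (gen_field A0 (beta q) Delta :: 'a ratfun3 set)"
proof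
  fix r :: "'a ratfun3"
  assume "r \<in> invariant_field q"
  then have r_fixed: "\<forall>c\<in>Fq q. sigma c r = r" by (simp add: invariant_field_def)
  obtain f g where r: "r = Fract f g" "g \<noteq> 0" by (cases r)
  define N where "N = orbit_prod q (to_fract g)"
  have N_fixed: "\<forall>c\<in>Fq q. sigma c N = N"
    using sigma_orbit_prod[OF finite_Fq] Fq_add by (simp add: N_def)
  have conjugates: "sigma c (to_fract g) \<in> powers_span (gen_field A0 (beta q) Delta) A1 q" for c
    by (simp add: sigma_to_fract to_fract_in_powers_span)
  have "N \<in> gen_field A0 (beta q) Delta"
    using N_fixed conjugates
    by (intro fixed_powers_span_in_gen_field) (simp_all add: N_def orbit_prod_def powers_span_A1_prod)
  moreover have "N \<noteq> 0"
    using finite_Fq r(2) by (simp add: N_def orbit_prod_def)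
  moreover have "r * N \<in> gen_field A0 (beta q) Delta"
  proof (rule fixed_powers_span_in_gen_field)
    have "(0 :: 'a) \<in> Fq q" using two_le_q by (simp add: Fq_def)
    then have "N = to_fract g * (\<Prod>c\<in>Fq q - {0}. sigma c (to_fract g))"
      using prod.remove[OF finite_Fq, of 0 "\<lambda>c. sigma c (to_fract g)"]
      by (simp add: N_def orbit_prod_def sigma_0)
    moreover have "r * to_fract g = to_fract f" using r by (simp add: to_fract_def eq_fract)
    ultimately have "r * N = to_fract f * (\<Prod>c\<in>Fq q - {0}. sigma c (to_fract g))"
      by (simp add: mult.assoc)
    then show "r * N \<in> powers_span (gen_field A0 (beta q) Delta) A1 q"
      by (simp add: powers_span_A1_mult powers_span_A1_prod to_fract_in_powers_span conjugates)
    show "\<forall>c\<in>Fq q. sigma c (r * N) = r * N"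
      using r_fixed N_fixed by (simp add: hom_distribs)
  qed
  ultimately have "r * N / N \<in> gen_field A0 (beta q) Delta"
    by (intro gen_field_divide)
  with \<open>N \<noteq> 0\<close> show "r \<in> gen_field A0 (beta q) Delta" by simp
qed

end

theorem lemma2p3:
  fixes p n q :: nat
  assumes "prime p" and "p > 2" and "n \<ge> 1" and "q = p ^ n"
    and "CHAR('a::field) = p"
    and "card (Fq q :: 'a set) = q"
  shows "(invariant_field q :: 'a ratfun3 set) = gen_field A0 (beta q) Delta"
proof -
  have "2 \<le> q"
    using assms(2-4) self_le_power[of p n] by simp
  moreover have "odd q"
    using assms(1,2,4) prime_odd_nat by simp
  moreover have Fq_add: "\<And>c d. c \<in> Fq q \<Longrightarrow> d \<in> Fq q \<Longrightarrow> c + d \<in> (Fq q :: 'a set)"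
    using Fq_add_closed[where 'a='a, of q n] assms(1,4,5) by simp
  ultimately show ?thesis
    using invariant_field_subset_gen_field[OF assms(6)]
      gen_field_subset_invariant_field[OF finite_Fq[OF assms(6)] Fq_add]
    by blast
qed

end
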